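(* Let $X$ be a Hilbert space, $(T(t))$ a $C_0$-semigroup on $X$ with $\|T(t)\|\le Me^{-\nu t}$, $\nu>0$, $N_1,\dots,N_n\in\mathcal L(X)$, $B\in\mathcal L(\mathbb R^n,X)$, $\varphi_0\in X$, $\Xi:=\sum_{i=1}^n\|N_i\|$, and let $u$ be a control with $\|u\|_{L^2((0,\infty),(\mathbb R^n,\|\cdot\|_\infty))}<\frac{\sqrt{2\nu}}{M\Xi}$. Define $\zeta_0(t)=T(t)\varphi_0$, $\zeta_1(t)=\int_0^tT(t-s)(\sum_{i=1}^nu_i(s)N_i\zeta_0(s)+Bu(s))ds$, and $\zeta_k(t)=\int_0^tT(t-s)\sum_{i=1}^nu_i(s)N_i\zeta_{k-1}(s)ds$ for $k\ge2$. Then the Volterra series $\zeta(t)=\sum_{m=0}^\infty\zeta_m(t)$ converges uniformly on $(0,\infty)$, and $\zeta$ is the mild solution, i.e. $\zeta(t)=T(t)\varphi_0+\int_0^tT(t-s)(\sum_{i=1}^nu_i(s)N_i\zeta(s)+Bu(s))ds$ for all $t>0$. *)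

theory Defs
  imports "HOL-Analysis.Analysis"
begin

text \<open>A strongly continuous (C_0) semigroup of bounded linear operators,
  indexed by t \<ge> 0 (values at negative times are irrelevant).\<close>
definition C0_semigroup :: "(real \<Rightarrow> 'a::real_normed_vector \<Rightarrow>\<^sub>L 'a) \<Rightarrow> bool" where
  "C0_semigroup T \<longleftrightarrow>
     T 0 = id_blinfun \<and>
     (\<forall>t s. 0 \<le> t \<longrightarrow> 0 \<le> s \<longrightarrow> T (t + s) = T t o\<^sub>L T s) \<and>
     (\<forall>x. ((\<lambda>t. T t x) \<longlongrightarrow> x) (at_right 0))"

definition ctrl_term :: "('n::finite \<Rightarrow> 'a::real_normed_vector \<Rightarrow>\<^sub>L 'a) \<Rightarrow> (real \<Rightarrow> real^'n) \<Rightarrow> real \<Rightarrow> 'a \<Rightarrow> 'a" where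
  "ctrl_term N u s z = (\<Sum>i\<in>UNIV. (u s $ i) *\<^sub>R N i z)"

primrec volterra_term ::
  "(real \<Rightarrow> 'a::real_normed_vector \<Rightarrow>\<^sub>L 'a) \<Rightarrow> ('n::finite \<Rightarrow> 'a \<Rightarrow>\<^sub>L 'a) \<Rightarrow> ((real^'n) \<Rightarrow>\<^sub>L 'a)
    \<Rightarrow> (real \<Rightarrow> real^'n) \<Rightarrow> 'a \<Rightarrow> nat \<Rightarrow> real \<Rightarrow> 'a" where
  "volterra_term T N B u \<phi>0 0 t = T t \<phi>0"
| "volterra_term T N B u \<phi>0 (Suc k) t =
     integral {0..t} (\<lambda>s. T (t - s)
        (ctrl_term N u s (volterra_term T N B u \<phi>0 k s) + (if k = 0 then B (u s) else 0)))"

definition control_L2_norm :: "(real \<Rightarrow> real^'n::finite) \<Rightarrow> real" where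
  "control_L2_norm u = sqrt (LINT s:{0<..}|lborel. (infnorm (u s))\<^sup>2)"

end

(* Let q = M * Xi * |u|_2 / sqrt (2 nu). By Cauchy-Schwarz (here: Young's inequality with an
   optimized parameter), the integral of exp (- nu (t - s)) * |u(s)|_inf over [0, t] is at most
   |u|_2 / sqrt (2 nu) for every t, so the exponential bound on T gives
   |zeta_(k+1)(t)| <= C q^k on [0, oo). As q < 1, the Volterra series converges uniformly by the
   Weierstrass M-test. The partial sum of order K + 2 satisfies the mild equation with the partial
   sum of order K + 1 inside the integral, and the same estimate, applied to the difference of that
   partial sum and the limit, lets one pass to the limit under the integral. *)

theory Submission
  imports Defs
begin

section \<open>Integrability of scalar times continuous functions\<close>

lemma riemann_sum_diff_le:
  fixes F h :: "real \<Rightarrow> 'b::real_normed_vector"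
  assumes D: "\<D> tagged_division_of S" and close: "\<forall>x\<in>S. norm (F x - h x) \<le> e * \<phi> x"
  shows "norm ((\<Sum>(x,K)\<in>\<D>. measure lborel K *\<^sub>R F x) - (\<Sum>(x,K)\<in>\<D>. measure lborel K *\<^sub>R h x))
     \<le> e * (\<Sum>(x,K)\<in>\<D>. measure lborel K *\<^sub>R \<phi> x)"
proof -
  have "(\<Sum>(x,K)\<in>\<D>. measure lborel K *\<^sub>R F x) - (\<Sum>(x,K)\<in>\<D>. measure lborel K *\<^sub>R h x)
      = (\<Sum>(x,K)\<in>\<D>. measure lborel K *\<^sub>R (F x - h x))"
    by (simp add: sum_subtractf[symmetric] case_prod_unfold scaleR_diff_right)
  also have "norm \<dots> \<le> (\<Sum>(x,K)\<in>\<D>. measure lborel K * norm (F x - h x))"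
    using norm_sum[of "\<lambda>(x,K). measure lborel K *\<^sub>R (F x - h x)" \<D>] by (simp add: case_prod_unfold)
  also have "\<dots> \<le> (\<Sum>(x,K)\<in>\<D>. measure lborel K * (e * \<phi> x))"
  proof (rule sum_mono, clarify)
    fix x K assume "(x, K) \<in> \<D>"
    then have "x \<in> S" using tagged_division_ofD(2,3)[OF D] by blast
    then show "measure lborel K * norm (F x - h x) \<le> measure lborel K * (e * \<phi> x)"
      using close by (simp add: mult_left_mono)
  qed
  also have "\<dots> = e * (\<Sum>(x,K)\<in>\<D>. measure lborel K *\<^sub>R \<phi> x)"
    by (simp add: sum_distrib_left case_prod_unfold mult.left_commute)
  finally show ?thesis .
qed

lemma riemann_sum_weighted_close:
  fixes F h :: "real \<Rightarrow> 'b::real_normed_vector"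
  assumes \<phi>: "(\<phi> has_integral I) (cbox a b)" and close: "\<forall>x\<in>cbox a b. norm (F x - h x) \<le> e * \<phi> x"
    and e: "e \<ge> 0"
  obtains \<gamma> where "gauge \<gamma>"
    "\<And>\<D>. \<D> tagged_division_of cbox a b \<Longrightarrow> \<gamma> fine \<D> \<Longrightarrow>
      norm ((\<Sum>(x,K)\<in>\<D>. measure lborel K *\<^sub>R F x) - (\<Sum>(x,K)\<in>\<D>. measure lborel K *\<^sub>R h x)) \<le> e * (I + 1)"
proof -
  obtain \<gamma> where \<gamma>: "gauge \<gamma>" and \<gamma>_sum: "\<And>\<D>. \<D> tagged_division_of cbox a b \<Longrightarrow> \<gamma> fine \<D> \<Longrightarrow>
      norm ((\<Sum>(x,K)\<in>\<D>. measure lborel K *\<^sub>R \<phi> x) - I) < 1"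
    using \<phi>[unfolded has_integral, rule_format, of 1] by auto
  show ?thesis
  proof (rule that[OF \<gamma>])
    fix \<D> assume \<D>: "\<D> tagged_division_of cbox a b" "\<gamma> fine \<D>"
    have "norm ((\<Sum>(x,K)\<in>\<D>. measure lborel K *\<^sub>R F x) - (\<Sum>(x,K)\<in>\<D>. measure lborel K *\<^sub>R h x))
        \<le> e * (\<Sum>(x,K)\<in>\<D>. measure lborel K *\<^sub>R \<phi> x)"
      by (rule riemann_sum_diff_le[OF \<D>(1) close])
    also have "\<dots> \<le> e * (I + 1)"
      using \<gamma>_sum[OF \<D>] e by (intro mult_left_mono) auto
    finally show "norm ((\<Sum>(x,K)\<in>\<D>. measure lborel K *\<^sub>R F x) - (\<Sum>(x,K)\<in>\<D>. measure lborel K *\<^sub>R h x))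
        \<le> e * (I + 1)" .
  qed
qed

lemma norm_diff_le_three:
  fixes x y a b :: "'a::real_normed_vector"
  shows "norm (x - y) \<le> norm (x - a) + norm (a - b) + norm (y - b)"
proof -
  have "norm (x - y) = norm ((x - a) + (a - b) - (y - b))" by simp
  also have "\<dots> \<le> norm ((x - a) + (a - b)) + norm (y - b)" by (rule norm_triangle_ineq4)
  also have "\<dots> \<le> norm (x - a) + norm (a - b) + norm (y - b)"
    by (intro add_right_mono norm_triangle_ineq)
  finally show ?thesis .
qed

lemma integrable_weighted_uniform_limit:
  fixes F :: "real \<Rightarrow> 'b::banach"
  assumes \<phi>: "\<phi> integrable_on {a..b}" and \<phi>_nonneg: "\<And>x. x \<in> {a..b} \<Longrightarrow> 0 \<le> \<phi> x"
    and approx: "\<And>e. e > 0 \<Longrightarrow> \<exists>h. h integrable_on {a..b} \<and> (\<forall>x\<in>{a..b}. norm (F x - h x) \<le> e * \<phi> x)"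
  shows "F integrable_on {a..b}"
proof -
  let ?R = "\<lambda>\<D> f. \<Sum>(x,K)\<in>\<D>. measure lborel K *\<^sub>R f x"
  define I where "I = integral {a..b} \<phi>"
  have I_nonneg: "I \<ge> 0" unfolding I_def by (rule integral_nonneg[OF \<phi> \<phi>_nonneg])
  have \<phi>_I: "(\<phi> has_integral I) (cbox a b)" using integrable_integral[OF \<phi>] unfolding I_def by simp
  show ?thesis unfolding cbox_interval[symmetric] integrable_Cauchy
  proof (intro allI impI)
    fix e :: real assume e: "e > 0"
    define e' where "e' = e / (4 * (I + 1))"
    have e': "e' > 0" using e I_nonneg unfolding e'_def by auto
    obtain h where h: "h integrable_on cbox a b" and h_close: "\<forall>x\<in>cbox a b. norm (F x - h x) \<le> e' * \<phi> x"
      using approx[OF e'] by auto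
    have "e' * (I + 1) = e/4" using I_nonneg unfolding e'_def by (simp add: field_simps)
    then obtain \<gamma>1 where \<gamma>1: "gauge \<gamma>1" and F_h: "\<And>\<D>. \<D> tagged_division_of cbox a b \<Longrightarrow> \<gamma>1 fine \<D> \<Longrightarrow>
        norm (?R \<D> F - ?R \<D> h) \<le> e/4"
      using riemann_sum_weighted_close[OF \<phi>_I h_close] e' by (metis less_imp_le)
    obtain \<gamma>2 where \<gamma>2: "gauge \<gamma>2" and \<gamma>2_sum: "\<And>\<D>1 \<D>2. \<D>1 tagged_division_of cbox a b \<Longrightarrow> \<gamma>2 fine \<D>1 \<Longrightarrow>
        \<D>2 tagged_division_of cbox a b \<Longrightarrow> \<gamma>2 fine \<D>2 \<Longrightarrow> norm (?R \<D>1 h - ?R \<D>2 h) < e/2"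
      using h[unfolded integrable_Cauchy, rule_format, of "e/2"] e by auto
    show "\<exists>\<gamma>. gauge \<gamma> \<and> (\<forall>\<D>1 \<D>2. \<D>1 tagged_division_of cbox a b \<and> \<gamma> fine \<D>1 \<and>
            \<D>2 tagged_division_of cbox a b \<and> \<gamma> fine \<D>2 \<longrightarrow> norm (?R \<D>1 F - ?R \<D>2 F) < e)"
    proof (intro exI[of _ "\<lambda>x. \<gamma>1 x \<inter> \<gamma>2 x"] conjI allI impI)
      show "gauge (\<lambda>x. \<gamma>1 x \<inter> \<gamma>2 x)" using \<gamma>1 \<gamma>2 by (rule gauge_Int)
      fix \<D>1 \<D>2
      assume A: "\<D>1 tagged_division_of cbox a b \<and> (\<lambda>x. \<gamma>1 x \<inter> \<gamma>2 x) fine \<D>1 \<and>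
        \<D>2 tagged_division_of cbox a b \<and> (\<lambda>x. \<gamma>1 x \<inter> \<gamma>2 x) fine \<D>2"
      then have fine: "\<gamma>1 fine \<D>1" "\<gamma>2 fine \<D>1" "\<gamma>1 fine \<D>2" "\<gamma>2 fine \<D>2"
        by (auto simp: fine_Int)
      have "norm (?R \<D>1 F - ?R \<D>1 h) \<le> e/4" "norm (?R \<D>2 F - ?R \<D>2 h) \<le> e/4"
        using F_h A fine by blast+
      moreover have "norm (?R \<D>1 h - ?R \<D>2 h) < e/2" using \<gamma>2_sum A fine by blast
      ultimately show "norm (?R \<D>1 F - ?R \<D>2 F) < e"
        using norm_diff_le_three[of "?R \<D>1 F" "?R \<D>2 F" "?R \<D>1 h" "?R \<D>2 h"] by linarith
    qed
  qed
qed

lemma nearest_grid_point_below: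
  fixes a b s :: real and n :: nat
  assumes ab: "a < b" and n: "n > 0" and s: "s \<in> {a..b}"
  defines "j \<equiv> nat \<lfloor>(s - a) * real n / (b - a)\<rfloor>"
  shows "j \<le> n" "a + (b - a) * real j / real n \<in> {a..b}"
    "\<bar>s - (a + (b - a) * real j / real n)\<bar> < (b - a) / real n"
proof -
  define r where "r = (s - a) * real n / (b - a)"
  have r: "0 \<le> r" "r \<le> real n" using ab s n unfolding r_def by (auto simp: field_simps)
  have j: "real j \<le> r" "r < real j + 1" unfolding j_def r_def[symmetric]
    using r by (auto simp: of_nat_nat)
  show "j \<le> n" using j r by linarith
  have s_eq: "s = a + (b - a) * r / real n" unfolding r_def using ab n by (simp add: field_simps)
  have "(b - a) * real j / real n \<le> (b - a) * r / real n"
    using j ab n by (intro divide_right_mono mult_left_mono) auto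
  moreover have "(b - a) * r / real n < (b - a) * (real j + 1) / real n"
    using j ab n by (intro divide_strict_right_mono mult_strict_left_mono) auto
  then have "(b - a) * r / real n < (b - a) * real j / real n + (b - a) / real n"
    by (simp add: distrib_left add_divide_distrib)
  moreover have "(b - a) * real j / real n \<ge> 0" using ab by auto
  ultimately show "a + (b - a) * real j / real n \<in> {a..b}"
    "\<bar>s - (a + (b - a) * real j / real n)\<bar> < (b - a) / real n"
    using s s_eq by auto
qed

lemma integrable_on_restrict_borel:
  fixes f :: "real \<Rightarrow> real"
  assumes f: "f absolutely_integrable_on {a..b}" and A: "A \<in> sets borel"
  shows "(\<lambda>s. if s \<in> A then f s else 0) integrable_on {a..b}"
proof -
  have "A \<inter> {a..b} \<in> sets lebesgue" using A by simp
  with f have "set_integrable lebesgue (A \<inter> {a..b}) f"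
    by (intro set_integrable_subset[OF _ _ Int_lower2]) simp_all
  then have "f integrable_on (A \<inter> {a..b})"
    by (rule set_lebesgue_integral_eq_integral)
  then show ?thesis using integrable_restrict_Int[of A f "{a..b}"] by simp
qed

text \<open>\<open>g\<close> is approximated uniformly by step functions on a fine grid, which makes the error
  at most \<open>e * \<bar>f\<bar>\<close>.\<close>

lemma integrable_scaleR_continuous:
  fixes f :: "real \<Rightarrow> real" and g :: "real \<Rightarrow> 'b::banach"
  assumes f: "f absolutely_integrable_on {a..b}" and g: "continuous_on {a..b} g"
  shows "(\<lambda>s. f s *\<^sub>R g s) integrable_on {a..b}"
proof (cases "a < b")
  case False
  then have "negligible {a..b}" by (cases "a = b") auto
  then show ?thesis using has_integral_negligible integrable_on_def by blast
next
  case ab: True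
  have abs_f: "(\<lambda>x. \<bar>f x\<bar>) integrable_on {a..b}"
    using f unfolding absolutely_integrable_on_def by auto
  have uc: "uniformly_continuous_on {a..b} g"
    using g by (intro compact_uniformly_continuous) auto
  show ?thesis
  proof (rule integrable_weighted_uniform_limit[OF abs_f])
    fix e :: real assume e: "e > 0"
    obtain d where d: "d > 0" and dd: "\<And>x x'. x \<in> {a..b} \<Longrightarrow> x' \<in> {a..b} \<Longrightarrow> dist x' x < d \<Longrightarrow> dist (g x') (g x) < e"
      using uc[unfolded uniformly_continuous_on_def, rule_format, OF e] by metis
    obtain n :: nat where n: "(b - a) / d < real n" using reals_Archimedean2 by blast
    have n0: "n > 0" using n ab d by (cases n) (auto simp: field_simps)
    have mesh: "(b - a) / real n < d" using n n0 d ab by (auto simp: field_simps)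
    define J where "J s = nat \<lfloor>(s - a) * real n / (b - a)\<rfloor>" for s
    define X where "X j = a + (b - a) * real j / real n" for j
    define h where "h s = (\<Sum>j\<le>n. (if J s = j then f s else 0) *\<^sub>R g (X j))" for s
    have "{s. J s = j} \<in> sets borel" for j unfolding J_def by measurable
    then have "h integrable_on {a..b}"
      unfolding h_def using integrable_on_restrict_borel[OF f, of "{s. J s = _}"]
      by (intro integrable_sum integrable_on_scaleR_left) auto
    moreover have "norm (f x *\<^sub>R g x - h x) \<le> e * \<bar>f x\<bar>" if x: "x \<in> {a..b}" for x
    proof -
      note grid = nearest_grid_point_below[OF ab n0 x, folded J_def X_def]
      have hx: "h x = f x *\<^sub>R g (X (J x))"
        unfolding h_def using grid(1) by (simp add: if_distrib[of "\<lambda>c. c *\<^sub>R _"] sum.delta' cong: if_cong)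
      have "dist (g x) (g (X (J x))) < e"
        using grid mesh x by (intro dd) (auto simp: dist_real_def)
      then have "\<bar>f x\<bar> * norm (g x - g (X (J x))) \<le> \<bar>f x\<bar> * e"
        by (intro mult_left_mono) (auto simp: dist_norm)
      then show ?thesis unfolding hx by (simp add: scaleR_diff_right[symmetric] mult.commute)
    qed
    ultimately show "\<exists>h. h integrable_on {a..b} \<and> (\<forall>x\<in>{a..b}. norm (f x *\<^sub>R g x - h x) \<le> e * \<bar>f x\<bar>)"
      by blast
  qed auto
qed

section \<open>Exponentially stable \<open>C\<^sub>0\<close>-semigroups and their convolutions\<close>

lemma continuous_on_atLeast:
  fixes f :: "real \<Rightarrow> 'b::topological_space"
  assumes "\<And>R. continuous_on {a..R} f"
  shows "continuous_on {a..} f"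
  unfolding continuous_on_def
proof
  fix x assume x: "x \<in> {a..}"
  have "(f \<longlongrightarrow> f x) (at x within {a..x + 1})"
    using assms[of "x + 1"] x by (simp add: continuous_on_def)
  moreover have "at x within {a..x + 1} = at x within {a..}"
    by (intro at_within_nhd[of _ "{..<x + 1}"]) auto
  ultimately show "(f \<longlongrightarrow> f x) (at x within {a..})" by simp
qed

locale exp_stable_semigroup =
  fixes T :: "real \<Rightarrow> 'a::banach \<Rightarrow>\<^sub>L 'a" and M \<nu> :: real
  assumes C0: "C0_semigroup T"
    and growth_bound: "\<forall>t\<ge>0. norm (T t) \<le> M * exp (- \<nu> * t)"
    and decay_rate_pos: "\<nu> > 0"
begin

lemma semigroup_apply: "0 \<le> t \<Longrightarrow> 0 \<le> s \<Longrightarrow> T (t + s) x = T t (T s x)"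
  using C0 unfolding C0_semigroup_def by simp

lemma M_nonneg: "M \<ge> 0"
proof -
  have "norm (T 0) \<le> M" using growth_bound by force
  then show ?thesis using norm_ge_zero[of "T 0"] by linarith
qed

lemma norm_T_apply_le_exp: "t \<ge> 0 \<Longrightarrow> norm (T t x) \<le> M * exp (- \<nu> * t) * norm x"
  using norm_blinfun[of "T t" x] growth_bound by (meson mult_right_mono norm_ge_zero order_trans)

lemma norm_T_apply_le: "t \<ge> 0 \<Longrightarrow> norm (T t x) \<le> M * norm x"
proof -
  assume t: "t \<ge> 0"
  have "M * exp (- \<nu> * t) \<le> M"
    using t decay_rate_pos M_nonneg by (simp add: mult_left_le)
  then show ?thesis
    using norm_T_apply_le_exp[OF t] by (meson mult_right_mono norm_ge_zero order_trans)
qed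

lemma dist_T_apply_le: 
  assumes "0 \<le> t" "0 \<le> t'"
  shows "dist (T t' x) (T t x) \<le> M * norm (T \<bar>t' - t\<bar> x - x)"
proof (cases "t \<le> t'")
  case True
  have "dist (T t' x) (T t x) = norm (T t (T (t' - t) x - x))"
    using semigroup_apply[of t "t' - t" x] assms True by (simp add: dist_norm blinfun.diff_right)
  also have "\<dots> \<le> M * norm (T (t' - t) x - x)" using assms(1) by (rule norm_T_apply_le)
  finally show ?thesis using True by simp
next
  case False
  have "dist (T t' x) (T t x) = norm (T t' (T (t - t') x - x))"
    using semigroup_apply[of t' "t - t'" x] assms False
    by (simp add: dist_norm blinfun.diff_right norm_minus_commute)
  also have "\<dots> \<le> M * norm (T (t - t') x - x)" using assms(2) by (rule norm_T_apply_le)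
  finally show ?thesis using False by simp
qed

lemma continuous_on_orbit: "continuous_on {0..} (\<lambda>t. T t x)"
  unfolding continuous_on_iff
proof (intro ballI allI impI)
  fix t e :: real assume t: "t \<in> {0..}" and e: "e > 0"
  have "eventually (\<lambda>h. dist (T h x) x < e / (M + 1)) (at_right 0)"
    using C0 e M_nonneg unfolding C0_semigroup_def by (auto simp: tendsto_iff)
  then obtain d where d: "d > 0" and near: "\<And>h. 0 < h \<Longrightarrow> h < d \<Longrightarrow> norm (T h x - x) < e / (M + 1)"
    unfolding eventually_at_right_field dist_norm by auto
  have "dist (T t' x) (T t x) < e" if t': "t' \<in> {0..}" "dist t' t < d" for t'
  proof (cases "t' = t")
    case False
    have "dist (T t' x) (T t x) \<le> M * norm (T \<bar>t' - t\<bar> x - x)"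
      using t t' by (intro dist_T_apply_le) auto
    also have "\<dots> \<le> M * (e / (M + 1))"
      using near[of "\<bar>t' - t\<bar>"] False t' M_nonneg by (intro mult_left_mono) (auto simp: dist_real_def)
    also have "\<dots> < e" using e M_nonneg by (simp add: field_simps)
    finally show ?thesis .
  qed (use e in simp)
  with d show "\<exists>d>0. \<forall>t'\<in>{0..}. dist t' t < d \<longrightarrow> dist (T t' x) (T t x) < e" by blast
qed

lemma continuous_on_T_apply:
  fixes r :: "'b::topological_space \<Rightarrow> real"
  assumes r: "continuous_on S r" and y: "continuous_on S y" and r_nonneg: "\<And>s. s \<in> S \<Longrightarrow> r s \<ge> 0"
  shows "continuous_on S (\<lambda>s. T (r s) (y s))"
  unfolding continuous_on_def
proof
  fix s0 assume s0: "s0 \<in> S"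
  have fixed: "((\<lambda>s. T (r s) (y s0)) \<longlongrightarrow> T (r s0) (y s0)) (at s0 within S)"
    using continuous_on_compose2[OF continuous_on_orbit[of "y s0"] r] r_nonneg s0
    unfolding continuous_on_def by auto
  have "((\<lambda>s. y s - y s0) \<longlongrightarrow> 0) (at s0 within S)"
    using y s0 unfolding continuous_on_def by (simp add: LIM_zero)
  then have "((\<lambda>s. M * norm (y s - y s0)) \<longlongrightarrow> 0) (at s0 within S)"
    by (intro tendsto_mult_right_zero tendsto_norm_zero)
  then have moving: "((\<lambda>s. T (r s) (y s - y s0)) \<longlongrightarrow> 0) (at s0 within S)"
    by (rule Lim_null_comparison[rotated])
      (use r_nonneg norm_T_apply_le in \<open>auto simp: eventually_at_filter intro!: always_eventually\<close>)
  show "((\<lambda>s. T (r s) (y s)) \<longlongrightarrow> T (r s0) (y s0)) (at s0 within S)"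
    using tendsto_add[OF moving fixed] by (simp add: blinfun.diff_right)
qed

definition convolution :: "(real \<Rightarrow> real) \<Rightarrow> (real \<Rightarrow> 'a) \<Rightarrow> real \<Rightarrow> 'a" where
  "convolution w c t = integral {0..t} (\<lambda>s. w s *\<^sub>R T (t - s) (c s))"

lemma integrable_convolution_integrand:
  assumes "w absolutely_integrable_on {0..t}" and "continuous_on {0..t} c"
  shows "(\<lambda>s. w s *\<^sub>R T (t - s) (c s)) integrable_on {0..t}"
  using assms by (intro integrable_scaleR_continuous continuous_on_T_apply) (auto intro!: continuous_intros)

lemma convolution_diff_eq:
  assumes w: "w absolutely_integrable_on {0..t'}" and c: "continuous_on {0..t'} c"
    and tt': "0 \<le> t" "t \<le> t'"
  shows "convolution w c t' - convolution w c t
    = integral {0..t} (\<lambda>s. w s *\<^sub>R (T (t' - s) (c s) - T (t - s) (c s)))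
      + integral {t..t'} (\<lambda>s. w s *\<^sub>R T (t' - s) (c s))"
proof -
  let ?F = "\<lambda>r s. w s *\<^sub>R T (r - s) (c s)"
  have F_t': "?F t' integrable_on {0..t'}"
    using w c by (rule integrable_convolution_integrand)
  have F_t: "?F t integrable_on {0..t}" using tt'
    by (intro integrable_convolution_integrand absolutely_integrable_on_subinterval[OF w]
        continuous_on_subset[OF c]) auto
  have "integral {0..t'} (?F t') = integral {0..t} (?F t') + integral {t..t'} (?F t')"
    using Henstock_Kurzweil_Integration.integral_combine[OF tt' F_t'] by simp
  moreover have "integral {0..t} (\<lambda>s. w s *\<^sub>R (T (t' - s) (c s) - T (t - s) (c s)))
      = integral {0..t} (?F t') - integral {0..t} (?F t)"
    using integral_diff[OF integrable_subinterval_real[OF F_t'] F_t] tt' by (simp add: scaleR_diff_right)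
  ultimately show ?thesis unfolding convolution_def by (simp add: algebra_simps)
qed

lemma norm_convolution_diff_le:
  fixes w :: "real \<Rightarrow> real"
  defines "W x \<equiv> integral {0..x} (\<lambda>s. \<bar>w s\<bar>)"
  assumes w: "w absolutely_integrable_on {0..t'}" and c: "continuous_on {0..t'} c"
    and tt': "0 \<le> t" "t \<le> t'"
    and near: "\<And>s. s \<in> {0..t} \<Longrightarrow> norm (T (t' - s) (c s) - T (t - s) (c s)) \<le> \<epsilon>"
    and bounded: "\<And>s. s \<in> {t..t'} \<Longrightarrow> norm (c s) \<le> C"
  shows "norm (convolution w c t' - convolution w c t) \<le> \<epsilon> * W t + M * C * (W t' - W t)"
proof -
  have abs_w: "(\<lambda>s. \<bar>w s\<bar>) integrable_on {0..t'}"
    using w unfolding absolutely_integrable_on_def by auto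
  have F: "(\<lambda>s. w s *\<^sub>R T (t' - s) (c s)) integrable_on {0..t'}"
    "(\<lambda>s. w s *\<^sub>R T (t - s) (c s)) integrable_on {0..t}"
    using tt' by (auto intro!: integrable_convolution_integrand absolutely_integrable_on_subinterval[OF w]
        continuous_on_subset[OF c])
  have "norm (integral {0..t} (\<lambda>s. w s *\<^sub>R (T (t' - s) (c s) - T (t - s) (c s))))
      \<le> integral {0..t} (\<lambda>s. \<epsilon> * \<bar>w s\<bar>)"
  proof (rule integral_norm_bound_integral)
    show "(\<lambda>s. w s *\<^sub>R (T (t' - s) (c s) - T (t - s) (c s))) integrable_on {0..t}"
      using integrable_diff[OF integrable_subinterval_real[OF F(1)] F(2)] tt' by (simp add: scaleR_diff_right)
    show "(\<lambda>s. \<epsilon> * \<bar>w s\<bar>) integrable_on {0..t}"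
      using integrable_subinterval_real[OF abs_w] tt' by (intro integrable_on_mult_right) auto
    show "norm (w s *\<^sub>R (T (t' - s) (c s) - T (t - s) (c s))) \<le> \<epsilon> * \<bar>w s\<bar>" if "s \<in> {0..t}" for s
      using mult_left_mono[OF near[OF that], of "\<bar>w s\<bar>"] by (simp add: mult.commute)
  qed
  moreover have "norm (integral {t..t'} (\<lambda>s. w s *\<^sub>R T (t' - s) (c s)))
      \<le> integral {t..t'} (\<lambda>s. M * C * \<bar>w s\<bar>)"
  proof (rule integral_norm_bound_integral)
    show "(\<lambda>s. w s *\<^sub>R T (t' - s) (c s)) integrable_on {t..t'}"
      using integrable_subinterval_real[OF F(1)] tt' by auto
    show "(\<lambda>s. M * C * \<bar>w s\<bar>) integrable_on {t..t'}"
      using integrable_subinterval_real[OF abs_w] tt' by (intro integrable_on_mult_right) auto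
    show "norm (w s *\<^sub>R T (t' - s) (c s)) \<le> M * C * \<bar>w s\<bar>" if s: "s \<in> {t..t'}" for s
    proof -
      have "norm (T (t' - s) (c s)) \<le> M * norm (c s)" using s by (intro norm_T_apply_le) auto
      also have "\<dots> \<le> M * C" using bounded[OF s] M_nonneg by (rule mult_left_mono)
      finally show ?thesis by (simp add: mult_left_mono mult.commute)
    qed
  qed
  moreover have "integral {0..t} (\<lambda>s. \<epsilon> * \<bar>w s\<bar>) = \<epsilon> * W t"
    unfolding W_def by simp
  moreover have "integral {t..t'} (\<lambda>s. M * C * \<bar>w s\<bar>) = M * C * (W t' - W t)"
    unfolding W_def using Henstock_Kurzweil_Integration.integral_combine[OF tt' abs_w] by simp
  ultimately show ?thesis
    unfolding convolution_diff_eq[OF w c tt'] by (smt (verit) norm_triangle_ineq)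
qed

lemma T_shift_modulus:
  assumes c: "continuous_on {0..R} c" and e: "e > 0"
  obtains d where "d > 0" "\<And>s t t'. 0 \<le> s \<Longrightarrow> s \<le> t \<Longrightarrow> t \<le> t' \<Longrightarrow> t' \<le> R \<Longrightarrow> t' - t < d \<Longrightarrow>
    norm (T (t' - s) (c s) - T (t - s) (c s)) < e"
proof -
  define K where "K = {0..R} \<times> {0..R}"
  have "continuous_on K (\<lambda>p. T (fst p) (c (snd p)))"
    using c by (intro continuous_on_T_apply continuous_on_compose2[OF c])
      (auto simp: K_def intro!: continuous_intros)
  then have "uniformly_continuous_on K (\<lambda>p. T (fst p) (c (snd p)))"
    by (intro compact_uniformly_continuous) (auto simp: K_def intro: compact_Times)
  then obtain d where "d > 0" and d: "\<And>p p'. p \<in> K \<Longrightarrow> p' \<in> K \<Longrightarrow> dist p' p < d \<Longrightarrow>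
      dist (T (fst p') (c (snd p'))) (T (fst p) (c (snd p))) < e"
    using e unfolding uniformly_continuous_on_def by metis
  show ?thesis
  proof (rule that[OF \<open>d > 0\<close>])
    fix s t t' assume "0 \<le> s" "s \<le> t" "t \<le> t'" "t' \<le> R" "t' - t < d"
    then show "norm (T (t' - s) (c s) - T (t - s) (c s)) < e"
      using d[of "(t - s, s)" "(t' - s, s)"] by (auto simp: K_def dist_Pair_Pair dist_real_def dist_norm)
  qed
qed

lemma uniformly_continuous_on_real_ordered:
  fixes f :: "real \<Rightarrow> 'b::metric_space"
  assumes "\<And>e. e > 0 \<Longrightarrow> \<exists>d>0. \<forall>t\<in>S. \<forall>t'\<in>S. t \<le> t' \<longrightarrow> t' - t < d \<longrightarrow> dist (f t') (f t) < e"
  shows "uniformly_continuous_on S f"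
  unfolding uniformly_continuous_on_def
proof (intro allI impI)
  fix e :: real assume "e > 0"
  then obtain d where "d > 0" and d: "\<forall>t\<in>S. \<forall>t'\<in>S. t \<le> t' \<longrightarrow> t' - t < d \<longrightarrow> dist (f t') (f t) < e"
    using assms by blast
  have "dist (f t') (f t) < e" if "t \<in> S" "t' \<in> S" "dist t' t < d" for t t'
    using d that by (cases "t \<le> t'") (auto simp: dist_real_def dist_commute)
  with \<open>d > 0\<close> show "\<exists>d>0. \<forall>t\<in>S. \<forall>t'\<in>S. dist t' t < d \<longrightarrow> dist (f t') (f t) < e" by blast
qed

lemma uniformly_continuous_on_convolution:
  assumes w: "w absolutely_integrable_on {0..R}" and c: "continuous_on {0..R} c"
  shows "uniformly_continuous_on {0..R} (convolution w c)"
proof -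
  define W where "W x = integral {0..x} (\<lambda>s. \<bar>w s\<bar>)" for x
  have abs_w: "(\<lambda>s. \<bar>w s\<bar>) integrable_on {0..R}"
    using w unfolding absolutely_integrable_on_def by auto
  have W_le: "W x \<le> W R" if "x \<in> {0..R}" for x
    unfolding W_def using that integrable_subinterval_real[OF abs_w]
    by (intro integral_subset_le[OF _ _ abs_w]) auto
  have W_nonneg: "0 \<le> W R" unfolding W_def by (rule integral_nonneg[OF abs_w]) auto
  have "uniformly_continuous_on {0..R} W"
    unfolding W_def by (intro compact_uniformly_continuous indefinite_integral_continuous_1 abs_w) auto
  moreover obtain C where C: "C > 0" and C_bound: "\<And>s. s \<in> {0..R} \<Longrightarrow> norm (c s) \<le> C"
    using compact_imp_bounded[OF compact_continuous_image[OF c compact_Icc]]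
    unfolding bounded_pos by auto
  ultimately show ?thesis
  proof (intro uniformly_continuous_on_real_ordered)
    fix e :: real assume e: "e > 0" and "uniformly_continuous_on {0..R} W"
    have frac: "0 < e / (2 * (x + 1))" "x * (e / (2 * (x + 1))) < e / 2" if "0 \<le> x" for x :: real
      using e that by (simp_all add: field_simps)
    define e1 where "e1 = e / (2 * (W R + 1))"
    define e2 where "e2 = e / (2 * (M * C + 1))"
    have e1: "e1 > 0" "W R * e1 < e / 2" unfolding e1_def using W_nonneg by (rule frac)+
    have "0 \<le> M * C" using M_nonneg C by simp
    then have e2: "e2 > 0" "M * C * e2 < e / 2" unfolding e2_def by (rule frac)+
    obtain d1 where "d1 > 0" and d1: "\<And>s t t'. 0 \<le> s \<Longrightarrow> s \<le> t \<Longrightarrow> t \<le> t' \<Longrightarrow> t' \<le> R \<Longrightarrow>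
        t' - t < d1 \<Longrightarrow> norm (T (t' - s) (c s) - T (t - s) (c s)) < e1"
      using T_shift_modulus[OF c e1(1)] by metis
    obtain d2 where "d2 > 0" and d2: "\<And>x x'. x \<in> {0..R} \<Longrightarrow> x' \<in> {0..R} \<Longrightarrow> dist x' x < d2 \<Longrightarrow>
        dist (W x') (W x) < e2"
      using \<open>uniformly_continuous_on {0..R} W\<close> e2(1) unfolding uniformly_continuous_on_def by metis
    have "dist (convolution w c t') (convolution w c t) < e"
      if t: "t \<in> {0..R}" "t' \<in> {0..R}" "t \<le> t'" "t' - t < min d1 d2" for t t'
    proof -
      have "norm (convolution w c t' - convolution w c t) \<le> e1 * W t + M * C * (W t' - W t)"
        unfolding W_def
      proof (rule norm_convolution_diff_le)
        show "w absolutely_integrable_on {0..t'}" "continuous_on {0..t'} c"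
          using t by (auto intro: absolutely_integrable_on_subinterval[OF w] continuous_on_subset[OF c])
        show "norm (T (t' - s) (c s) - T (t - s) (c s)) \<le> e1" if "s \<in> {0..t}" for s
          using d1[of s t t'] that t by auto
        show "norm (c s) \<le> C" if "s \<in> {t..t'}" for s
          using C_bound that t by auto
      qed (use t in auto)
      also have "\<dots> < e / 2 + e / 2"
      proof (rule add_le_less_mono)
        have "e1 * W t \<le> e1 * W R" using W_le[OF t(1)] e1 by (intro mult_left_mono) auto
        then show "e1 * W t \<le> e / 2" using e1(2) by (simp add: mult.commute)
        have "M * C * (W t' - W t) \<le> M * C * e2"
          using d2[of t t'] t \<open>0 \<le> M * C\<close> by (intro mult_left_mono) (auto simp: dist_real_def)
        then show "M * C * (W t' - W t) < e / 2" using e2 by linarith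
      qed
      finally show ?thesis by (simp add: dist_norm)
    qed
    then show "\<exists>d>0. \<forall>t\<in>{0..R}. \<forall>t'\<in>{0..R}. t \<le> t' \<longrightarrow> t' - t < d \<longrightarrow>
        dist (convolution w c t') (convolution w c t) < e"
      using \<open>d1 > 0\<close> \<open>d2 > 0\<close> by (intro exI[of _ "min d1 d2"]) auto
  qed
qed

lemma continuous_on_convolution:
  assumes "\<And>R. w absolutely_integrable_on {0..R}" and "continuous_on {0..} c"
  shows "continuous_on {0..} (convolution w c)"
  using assms by (intro continuous_on_atLeast uniformly_continuous_imp_continuous
      uniformly_continuous_on_convolution continuous_on_subset[OF assms(2)]) auto

end

section \<open>Square integrable controls\<close>

locale L2_control =
  fixes u :: "real \<Rightarrow> real^'n::finite"
  assumes measurable: "set_borel_measurable lborel {0<..} u"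
    and square_integrable: "set_integrable lborel {0<..} (\<lambda>s. (infnorm (u s))\<^sup>2)"
begin

definition energy :: real where
  "energy = (LINT s:{0<..}|lborel. (infnorm (u s))\<^sup>2)"

lemma square_infnorm_has_integral:
  "((\<lambda>s. if 0 < s then (infnorm (u s))\<^sup>2 else 0) has_integral energy) UNIV"
proof -
  note HK = set_borel_integral_eq_integral[OF square_integrable]
  show ?thesis
    using integrable_integral[OF integrable_restrict_UNIV[THEN iffD2, OF HK(1)]]
      Henstock_Kurzweil_Integration.integral_restrict_UNIV[of "{0<..}" "\<lambda>s. (infnorm (u s))\<^sup>2"]
    unfolding energy_def HK(2) by simp
qed

lemma energy_nonneg: "energy \<ge> 0"
  by (rule has_integral_nonneg[OF square_infnorm_has_integral]) auto

lemma integrable_square_infnorm_restrict: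
  "(\<lambda>s. if 0 < s then (infnorm (u s))\<^sup>2 else 0) integrable_on {a..b}"
  using integrable_on_subinterval[OF has_integral_integrable[OF square_infnorm_has_integral], of a b]
  by simp

lemma integrable_square_infnorm: "(\<lambda>s. (infnorm (u s))\<^sup>2) integrable_on {0..t}"
  by (rule integrable_spike[OF integrable_square_infnorm_restrict negligible_sing[of 0]]) simp

lemma integral_square_infnorm_le: "integral {0..t} (\<lambda>s. (infnorm (u s))\<^sup>2) \<le> energy"
proof -
  have "integral {0..t} (\<lambda>s. (infnorm (u s))\<^sup>2)
      = integral {0..t} (\<lambda>s. if 0 < s then (infnorm (u s))\<^sup>2 else 0)"
    by (rule integral_spike[OF negligible_sing[of 0]]) simp
  also have "\<dots> \<le> integral UNIV (\<lambda>s. if 0 < s then (infnorm (u s))\<^sup>2 else 0)"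
    by (rule integral_subset_le[OF subset_UNIV integrable_square_infnorm_restrict
          has_integral_integrable[OF square_infnorm_has_integral]]) simp
  also have "\<dots> = energy" by (rule integral_unique[OF square_infnorm_has_integral])
  finally show ?thesis .
qed

text \<open>Only the restriction of \<open>u\<close> to \<open>(0,\<infinity>)\<close> is measurable, and on a bounded
  interval \<open>\<bar>x\<bar> \<le> 1 + x\<^sup>2\<close> turns square integrability into integrability.\<close>

lemma absolutely_integrable_control:
  assumes g: "continuous_on UNIV g" and g_le: "\<And>x. \<bar>g x\<bar> \<le> infnorm x"
  shows "(\<lambda>s. g (u s)) absolutely_integrable_on {0..t}"
proof -
  define v where "v s = indicator {0<..} s *\<^sub>R u s" for s
  have "v \<in> borel_measurable (lebesgue_on {0..t})"
    using measurable_completion[OF measurable[unfolded set_borel_measurable_def]]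
    unfolding v_def by (rule measurable_restrict_space1)
  moreover have "norm (g (v s)) \<le> 1 + (infnorm (u s))\<^sup>2" for s
  proof -
    have "\<bar>g (v s)\<bar> \<le> infnorm (u s)"
      using g_le[of "v s"] infnorm_pos_le[of "u s"] by (auto simp: v_def indicator_def infnorm_0)
    also have "\<dots> \<le> 1 + (infnorm (u s))\<^sup>2"
      using zero_le_power2[of "infnorm (u s) - 1"] infnorm_pos_le[of "u s"]
      by (simp add: power2_eq_square algebra_simps)
    finally show ?thesis by simp
  qed
  ultimately have "(\<lambda>s. g (v s)) absolutely_integrable_on {0..t}"
    using integrable_add[OF integrable_const_ivl integrable_square_infnorm]
    by (intro measurable_bounded_by_integrable_imp_absolutely_integrable[where g = "\<lambda>s. 1 + (infnorm (u s))\<^sup>2"]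
        borel_measurable_continuous_on[OF g]) auto
  then show ?thesis
    by (rule absolutely_integrable_spike[OF _ negligible_sing[of 0]]) (auto simp: v_def)
qed

lemma absolutely_integrable_control_component: "(\<lambda>s. u s $ i) absolutely_integrable_on {0..t}"
  by (rule absolutely_integrable_control) (auto intro: component_le_infnorm_cart continuous_intros)

lemma absolutely_integrable_control_infnorm: "(\<lambda>s. infnorm (u s)) absolutely_integrable_on {0..t}"
  by (rule absolutely_integrable_control) (auto simp: infnorm_pos_le intro: continuous_intros)

end

section \<open>The Duhamel integral of the bilinear system\<close>

locale bilinear_control_system = exp_stable_semigroup T M \<nu> + L2_control u
  for T :: "real \<Rightarrow> 'a::banach \<Rightarrow>\<^sub>L 'a" and M \<nu> :: real and u :: "real \<Rightarrow> real^'n::finite"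
begin

lemma exp_decay_squared_has_integral:
  assumes "t \<ge> 0"
  shows "((\<lambda>s. exp (2 * \<nu> * (s - t))) has_integral (1 - exp (- 2 * \<nu> * t)) / (2 * \<nu>)) {0..t}"
proof -
  have "((\<lambda>s. exp (2 * \<nu> * (s - t)) / (2 * \<nu>)) has_real_derivative exp (2 * \<nu> * (s - t))) (at s within {0..t})"
    for s using decay_rate_pos by (auto intro!: derivative_eq_intros)
  from fundamental_theorem_of_calculus[OF assms this[unfolded has_real_derivative_iff_has_vector_derivative]]
  show ?thesis by (simp add: diff_divide_distrib)
qed

lemma integrable_exp_infnorm: "(\<lambda>s. exp (- \<nu> * (t - s)) * infnorm (u s)) integrable_on {0..t}"
proof -
  have "(\<lambda>s. infnorm (u s) *\<^sub>R exp (- \<nu> * (t - s))) integrable_on {0..t}"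
    by (rule integrable_scaleR_continuous[OF absolutely_integrable_control_infnorm])
      (auto intro!: continuous_intros)
  then show ?thesis by (simp add: mult.commute)
qed

lemma integral_exp_infnorm_le_Young:
  assumes t: "t \<ge> 0" and lam: "lam > 0"
  shows "integral {0..t} (\<lambda>s. exp (- \<nu> * (t - s)) * infnorm (u s)) \<le> lam / (4 * \<nu>) + energy / (2 * lam)"
proof -
  let ?E = "\<lambda>s. exp (2 * \<nu> * (s - t))" and ?U = "\<lambda>s. (infnorm (u s))\<^sup>2"
  have E: "(?E has_integral (1 - exp (- 2 * \<nu> * t)) / (2 * \<nu>)) {0..t}"
    by (rule exp_decay_squared_has_integral[OF t])
  have "integral {0..t} (\<lambda>s. exp (- \<nu> * (t - s)) * infnorm (u s))
      \<le> integral {0..t} (\<lambda>s. lam / 2 * ?E s + 1 / (2 * lam) * ?U s)"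
  proof (rule integral_le[OF integrable_exp_infnorm])
    show "(\<lambda>s. lam / 2 * ?E s + 1 / (2 * lam) * ?U s) integrable_on {0..t}"
      using E integrable_square_infnorm by (intro integrable_add integrable_on_mult_right) auto
    fix s
    have "?E s = (exp (- \<nu> * (t - s)))\<^sup>2"
      by (simp add: power2_eq_square exp_add[symmetric] algebra_simps)
    moreover have "a * b \<le> lam / 2 * a\<^sup>2 + 1 / (2 * lam) * b\<^sup>2" for a b :: real
    proof -
      have "0 \<le> (lam * a - b)\<^sup>2" by simp
      then show ?thesis using lam by (simp add: field_simps power2_eq_square)
    qed
    ultimately show "exp (- \<nu> * (t - s)) * infnorm (u s) \<le> lam / 2 * ?E s + 1 / (2 * lam) * ?U s"
      by simp
  qed
  also have "\<dots> = lam / 2 * ((1 - exp (- 2 * \<nu> * t)) / (2 * \<nu>)) + 1 / (2 * lam) * integral {0..t} ?U"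
    by (intro integral_unique has_integral_add has_integral_mult_right E
        integrable_integral integrable_square_infnorm)
  also have "\<dots> \<le> lam / 2 * (1 / (2 * \<nu>)) + 1 / (2 * lam) * energy"
    using lam decay_rate_pos integral_square_infnorm_le[of t]
    by (intro add_mono mult_left_mono divide_right_mono) auto
  finally show ?thesis by simp
qed

lemma integral_exp_infnorm_le:
  assumes t: "t \<ge> 0"
  shows "integral {0..t} (\<lambda>s. exp (- \<nu> * (t - s)) * infnorm (u s)) \<le> sqrt energy / sqrt (2 * \<nu>)"
proof (cases "energy = 0")
  case True
  show ?thesis
  proof (rule field_le_epsilon)
    fix e :: real assume "e > 0"
    then show "integral {0..t} (\<lambda>s. exp (- \<nu> * (t - s)) * infnorm (u s)) \<le> sqrt energy / sqrt (2 * \<nu>) + e"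
      using integral_exp_infnorm_le_Young[OF t, of "4 * \<nu> * e"] decay_rate_pos True by simp
  qed
next
  case False
  define a b where "a = sqrt (2 * \<nu>)" and "b = sqrt energy"
  have a: "a > 0" "a\<^sup>2 = 2 * \<nu>" using decay_rate_pos unfolding a_def by auto
  have b: "b > 0" "b\<^sup>2 = energy" using energy_nonneg False unfolding b_def by auto
  have "(a * b) / (2 * a\<^sup>2) + b\<^sup>2 / (2 * (a * b)) = b / a"
    using a(1) b(1) by (simp add: field_simps power2_eq_square)
  then have "(a * b) / (4 * \<nu>) + energy / (2 * (a * b)) = b / a"
    using a(2) b(2) by simp
  then show ?thesis
    using integral_exp_infnorm_le_Young[OF t, of "a * b"] a b unfolding a_def b_def by simp
qed

definition duhamel :: "('n \<Rightarrow> real \<Rightarrow> 'a) \<Rightarrow> real \<Rightarrow> 'a" where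
  "duhamel c t = integral {0..t} (\<lambda>s. T (t - s) (\<Sum>i\<in>UNIV. u s $ i *\<^sub>R c i s))"

lemma T_apply_control_sum:
  "T r (\<Sum>i\<in>UNIV. u s $ i *\<^sub>R c i s) = (\<Sum>i\<in>UNIV. u s $ i *\<^sub>R T r (c i s))"
  by (simp add: blinfun.sum_right blinfun.scaleR_right)

lemma integrable_duhamel_integrand:
  assumes "\<And>i. continuous_on {0..t} (c i)"
  shows "(\<lambda>s. T (t - s) (\<Sum>i\<in>UNIV. u s $ i *\<^sub>R c i s)) integrable_on {0..t}"
  unfolding T_apply_control_sum
  by (intro integrable_sum integrable_convolution_integrand absolutely_integrable_control_component assms)
    simp

lemma duhamel_eq_sum_convolution:
  assumes "\<And>i. continuous_on {0..t} (c i)"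
  shows "duhamel c t = (\<Sum>i\<in>UNIV. convolution (\<lambda>s. u s $ i) (c i) t)"
  unfolding duhamel_def convolution_def T_apply_control_sum
  by (intro integral_sum integrable_convolution_integrand absolutely_integrable_control_component assms) simp

lemma continuous_on_duhamel:
  assumes "\<And>i. continuous_on {0..} (c i)"
  shows "continuous_on {0..} (duhamel c)"
proof (rule continuous_on_eq)
  show "continuous_on {0..} (\<lambda>t. \<Sum>i\<in>UNIV. convolution (\<lambda>s. u s $ i) (c i) t)"
    by (intro continuous_on_sum continuous_on_convolution absolutely_integrable_control_component assms)
  show "(\<Sum>i\<in>UNIV. convolution (\<lambda>s. u s $ i) (c i) t) = duhamel c t" if "t \<in> {0..}" for t
  proof -
    have "continuous_on {0..t} (c i)" for i using that by (auto intro: continuous_on_subset[OF assms])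
    then show ?thesis by (rule duhamel_eq_sum_convolution[symmetric])
  qed
qed

lemma norm_duhamel_integrand_le:
  assumes s: "0 \<le> s" "s \<le> t" and K: "\<And>i. norm (c i s) \<le> K i"
  shows "norm (T (t - s) (\<Sum>i\<in>UNIV. u s $ i *\<^sub>R c i s))
    \<le> M * (\<Sum>i\<in>UNIV. K i) * (exp (- \<nu> * (t - s)) * infnorm (u s))"
proof -
  have "norm (T (t - s) (\<Sum>i\<in>UNIV. u s $ i *\<^sub>R c i s)) \<le> (\<Sum>i\<in>UNIV. \<bar>u s $ i\<bar> * norm (T (t - s) (c i s)))"
    unfolding T_apply_control_sum
    using norm_sum[of "\<lambda>i. u s $ i *\<^sub>R T (t - s) (c i s)" UNIV] by simp
  also have "\<dots> \<le> (\<Sum>i\<in>UNIV. infnorm (u s) * (M * exp (- \<nu> * (t - s)) * K i))"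
  proof (rule sum_mono)
    fix i
    have "norm (T (t - s) (c i s)) \<le> M * exp (- \<nu> * (t - s)) * norm (c i s)"
      using s by (intro norm_T_apply_le_exp) auto
    also have "\<dots> \<le> M * exp (- \<nu> * (t - s)) * K i"
      using K M_nonneg by (intro mult_left_mono) auto
    finally show "\<bar>u s $ i\<bar> * norm (T (t - s) (c i s)) \<le> infnorm (u s) * (M * exp (- \<nu> * (t - s)) * K i)"
      using component_le_infnorm_cart[of "u s" i] by (intro mult_mono) auto
  qed
  also have "\<dots> = M * (\<Sum>i\<in>UNIV. K i) * (exp (- \<nu> * (t - s)) * infnorm (u s))"
    by (simp add: sum_distrib_left sum_distrib_right algebra_simps)
  finally show ?thesis .
qed

lemma norm_duhamel_le:
  assumes t: "t \<ge> 0" and c: "\<And>i. continuous_on {0..t} (c i)"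
    and K: "\<And>i s. s \<in> {0..t} \<Longrightarrow> norm (c i s) \<le> K i"
  shows "norm (duhamel c t) \<le> M * (\<Sum>i\<in>UNIV. K i) * (sqrt energy / sqrt (2 * \<nu>))"
proof -
  have K_nonneg: "K i \<ge> 0" for i using K[of 0 i] t by (simp add: order_trans[OF norm_ge_zero])
  have MK: "M * (\<Sum>i\<in>UNIV. K i) \<ge> 0" using M_nonneg K_nonneg by (simp add: sum_nonneg)
  have "norm (duhamel c t)
      \<le> integral {0..t} (\<lambda>s. M * (\<Sum>i\<in>UNIV. K i) * (exp (- \<nu> * (t - s)) * infnorm (u s)))"
    unfolding duhamel_def using K
    by (intro integral_norm_bound_integral integrable_duhamel_integrand c integrable_on_mult_right
        integrable_exp_infnorm norm_duhamel_integrand_le) auto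
  also have "\<dots> = M * (\<Sum>i\<in>UNIV. K i) * integral {0..t} (\<lambda>s. exp (- \<nu> * (t - s)) * infnorm (u s))"
    by simp
  also have "\<dots> \<le> M * (\<Sum>i\<in>UNIV. K i) * (sqrt energy / sqrt (2 * \<nu>))"
    using integral_exp_infnorm_le[OF t] MK by (rule mult_left_mono)
  finally show ?thesis .
qed

lemma duhamel_diff:
  assumes "\<And>i. continuous_on {0..t} (c i)" and "\<And>i. continuous_on {0..t} (d i)"
  shows "duhamel c t - duhamel d t = duhamel (\<lambda>i s. c i s - d i s) t"
  unfolding duhamel_def
  by (simp add: integral_diff[OF integrable_duhamel_integrand integrable_duhamel_integrand] assms
      scaleR_diff_right sum_subtractf blinfun.diff_right)

lemma duhamel_tendsto:
  assumes t: "t \<ge> 0" and c: "\<And>K i. continuous_on {0..t} (c K i)" and d: "\<And>i. continuous_on {0..t} (d i)"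
    and lim: "\<And>i. uniform_limit {0..t} (\<lambda>K. c K i) (d i) sequentially"
  shows "(\<lambda>K. duhamel (c K) t) \<longlonglongrightarrow> duhamel d t"
  unfolding tendsto_iff dist_norm
proof (intro allI impI)
  fix r :: real assume r: "r > 0"
  define G where "G = M * real CARD('n) * (sqrt energy / sqrt (2 * \<nu>))"
  have "G \<ge> 0" unfolding G_def using M_nonneg energy_nonneg decay_rate_pos by simp
  define e where "e = r / (G + 1)"
  have e: "e > 0" "G * e < r"
    using r \<open>G \<ge> 0\<close> unfolding e_def by (auto simp: field_simps)
  have "\<forall>\<^sub>F K in sequentially. \<forall>i. \<forall>s\<in>{0..t}. dist (c K i s) (d i s) < e"
    using uniform_limitD[OF lim e(1)] by (simp add: eventually_all_finite)
  then show "\<forall>\<^sub>F K in sequentially. norm (duhamel (c K) t - duhamel d t) < r"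
  proof (rule eventually_mono)
    fix K assume close: "\<forall>i. \<forall>s\<in>{0..t}. dist (c K i s) (d i s) < e"
    have "norm (duhamel (c K) t - duhamel d t) = norm (duhamel (\<lambda>i s. c K i s - d i s) t)"
      using c d by (simp add: duhamel_diff)
    also have "\<dots> \<le> M * (\<Sum>i::'n\<in>UNIV. e) * (sqrt energy / sqrt (2 * \<nu>))"
    proof (rule norm_duhamel_le[OF t])
      show "continuous_on {0..t} (\<lambda>s. c K i s - d i s)" for i using c d by (rule continuous_on_diff)
      show "norm (c K i s - d i s) \<le> e" if "s \<in> {0..t}" for i s
        using close that by (auto simp: dist_norm less_imp_le)
    qed
    also have "\<dots> = G * e" unfolding G_def by simp
    finally show "norm (duhamel (c K) t - duhamel d t) < r" using e(2) by linarith
  qed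
qed

end

section \<open>Convergence of the Volterra series\<close>

lemma blinfun_apply_vec_eq_sum:
  fixes B :: "(real^'n::finite) \<Rightarrow>\<^sub>L 'a::real_normed_vector"
  shows "B x = (\<Sum>i\<in>UNIV. x $ i *\<^sub>R B (axis i 1))"
proof -
  have "B x = B (\<Sum>i\<in>UNIV. x $ i *\<^sub>R axis i 1)"
    using basis_expansion[of x] by (simp add: scalar_mult_eq_scaleR)
  then show ?thesis by (simp add: blinfun.sum_right blinfun.scaleR_right)
qed

lemma ctrl_term_add_eq_sum:
  fixes N :: "'n::finite \<Rightarrow> 'a::real_normed_vector \<Rightarrow>\<^sub>L 'a" and B :: "(real^'n) \<Rightarrow>\<^sub>L 'a"
  shows "ctrl_term N u s z + (if b then B (u s) else 0)
    = (\<Sum>i\<in>UNIV. u s $ i *\<^sub>R (N i z + (if b then B (axis i 1) else 0)))"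
  unfolding ctrl_term_def blinfun_apply_vec_eq_sum[of B "u s"]
  by (simp add: scaleR_add_right sum.distrib)

locale volterra_series = bilinear_control_system T M \<nu> u
  for T :: "real \<Rightarrow> 'a::banach \<Rightarrow>\<^sub>L 'a" and M \<nu> :: real and u :: "real \<Rightarrow> real^'n::finite" +
  fixes N :: "'n \<Rightarrow> 'a \<Rightarrow>\<^sub>L 'a" and B :: "(real^'n) \<Rightarrow>\<^sub>L 'a" and \<phi>0 :: 'a
begin

abbreviation V :: "nat \<Rightarrow> real \<Rightarrow> 'a" where
  "V \<equiv> volterra_term T N B u \<phi>0"

text \<open>Expanding \<open>B (u s) = (\<Sum>i. u s $ i *\<^sub>R B (axis i 1))\<close> puts every Volterra term in the
  form \<open>duhamel (forcing k)\<close>; the input \<open>B\<close> only enters the first order term.\<close>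

definition forcing :: "nat \<Rightarrow> 'n \<Rightarrow> real \<Rightarrow> 'a" where
  "forcing k i s = N i (V k s) + (if k = 0 then B (axis i 1) else 0)"

definition partial_sum :: "nat \<Rightarrow> real \<Rightarrow> 'a" where
  "partial_sum K t = (\<Sum>m<K. V m t)"

definition contraction :: real where
  "contraction = M * (\<Sum>i\<in>UNIV. norm (N i)) * (sqrt energy / sqrt (2 * \<nu>))"

lemma volterra_term_Suc_eq_duhamel: "V (Suc k) t = duhamel (forcing k) t"
  unfolding duhamel_def forcing_def by (simp add: ctrl_term_add_eq_sum)

lemma continuous_on_volterra_term: "continuous_on {0..} (V k)"
proof (induction k)
  case 0
  then show ?case by (simp add: continuous_on_orbit)
next
  case (Suc k)
  then have "continuous_on {0..} (forcing k i)" for i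
    unfolding forcing_def by (intro continuous_intros)
  then show ?case
    unfolding volterra_term_Suc_eq_duhamel[abs_def] by (rule continuous_on_duhamel)
qed

lemma continuous_on_forcing: "S \<subseteq> {0..} \<Longrightarrow> continuous_on S (forcing k i)"
  unfolding forcing_def
  by (intro continuous_intros continuous_on_subset[OF continuous_on_volterra_term])

lemma contraction_nonneg: "contraction \<ge> 0"
  unfolding contraction_def using M_nonneg energy_nonneg decay_rate_pos
  by (intro mult_nonneg_nonneg divide_nonneg_nonneg sum_nonneg) auto

definition volterra_bound :: "nat \<Rightarrow> real" where
  "volterra_bound m = (if m = 0 then M * norm \<phi>0
     else M * (\<Sum>i\<in>UNIV. norm (N i) * (M * norm \<phi>0) + norm (B (axis i 1)))
       * (sqrt energy / sqrt (2 * \<nu>)) * contraction ^ (m - 1))"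

lemma norm_volterra_term_le:
  assumes "t \<ge> 0"
  shows "norm (V m t) \<le> volterra_bound m"
  using assms
proof (induction m arbitrary: t)
  case 0
  then show ?case by (simp add: volterra_bound_def norm_T_apply_le)
next
  case (Suc k)
  have "norm (duhamel (forcing k) t) \<le> M * (\<Sum>i\<in>UNIV. norm (N i) * volterra_bound k
      + (if k = 0 then norm (B (axis i 1)) else 0)) * (sqrt energy / sqrt (2 * \<nu>))"
  proof (rule norm_duhamel_le[OF Suc.prems continuous_on_forcing])
    fix i s assume s: "s \<in> {0..t}"
    have "norm (N i (V k s)) \<le> norm (N i) * volterra_bound k"
      using norm_blinfun[of "N i" "V k s"] Suc.IH[of s] s
      by (meson atLeastAtMost_iff mult_left_mono norm_ge_zero order_trans)
    then show "norm (forcing k i s) \<le> norm (N i) * volterra_bound k + (if k = 0 then norm (B (axis i 1)) else 0)"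
      unfolding forcing_def by (auto intro: norm_triangle_le add_mono)
  qed auto
  also have "\<dots> = volterra_bound (Suc k)"
  proof (cases k)
    case (Suc j)
    have "M * (\<Sum>i\<in>UNIV. norm (N i) * volterra_bound k) * (sqrt energy / sqrt (2 * \<nu>))
        = contraction * volterra_bound k"
      by (simp add: contraction_def sum_distrib_right[symmetric] ac_simps)
    also have "\<dots> = volterra_bound (Suc k)"
      using Suc by (simp add: volterra_bound_def)
    finally show ?thesis using Suc by simp
  qed (simp add: volterra_bound_def)
  finally show ?case unfolding volterra_term_Suc_eq_duhamel .
qed

lemma duhamel_sum_forcing:
  assumes "t \<ge> 0" and "finite A"
  shows "(\<Sum>m\<in>A. duhamel (forcing m) t) = duhamel (\<lambda>i s. \<Sum>m\<in>A. forcing m i s) t"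
proof -
  have "(\<Sum>m\<in>A. duhamel (forcing m) t)
      = integral {0..t} (\<lambda>s. \<Sum>m\<in>A. T (t - s) (\<Sum>i\<in>UNIV. u s $ i *\<^sub>R forcing m i s))"
    unfolding duhamel_def using assms
    by (intro integral_sum[symmetric] integrable_duhamel_integrand continuous_on_forcing) auto
  also have "\<dots> = duhamel (\<lambda>i s. \<Sum>m\<in>A. forcing m i s) t"
    unfolding duhamel_def T_apply_control_sum
    by (simp add: blinfun.sum_right blinfun.scaleR_right scaleR_sum_right sum.swap[of _ A])
  finally show ?thesis .
qed

lemma partial_sum_Suc_Suc:
  assumes "t \<ge> 0"
  shows "partial_sum (Suc (Suc K)) t = T t \<phi>0 + duhamel (\<lambda>i s. N i (partial_sum (Suc K) s) + B (axis i 1)) t"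
proof -
  have forcing_sum: "(\<lambda>i s. \<Sum>m<Suc K. forcing m i s) = (\<lambda>i s. N i (partial_sum (Suc K) s) + B (axis i 1))"
  proof (intro ext)
    show "(\<Sum>m<Suc K. forcing m i s) = N i (partial_sum (Suc K) s) + B (axis i 1)" for i s
      by (induction K) (simp_all add: forcing_def partial_sum_def blinfun.add_right)
  qed
  have "partial_sum (Suc (Suc K)) t = V 0 t + (\<Sum>m<Suc K. V (Suc m) t)"
    unfolding partial_sum_def by (rule sum.lessThan_Suc_shift)
  also have "\<dots> = V 0 t + (\<Sum>m<Suc K. duhamel (forcing m) t)"
    unfolding volterra_term_Suc_eq_duhamel ..
  also have "\<dots> = T t \<phi>0 + duhamel (\<lambda>i s. N i (partial_sum (Suc K) s) + B (axis i 1)) t"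
    by (simp only: duhamel_sum_forcing[OF assms finite_lessThan] forcing_sum volterra_term.simps(1))
  finally show ?thesis .
qed

definition volterra_sum :: "real \<Rightarrow> 'a" where
  "volterra_sum t = (\<Sum>m. V m t)"

lemma uniform_limit_partial_sum:
  assumes "contraction < 1"
  shows "uniform_limit {0..} partial_sum volterra_sum sequentially"
proof -
  have "summable (\<lambda>m. volterra_bound (Suc m))"
    unfolding volterra_bound_def using assms contraction_nonneg by (simp add: summable_mult summable_geometric)
  then have "summable volterra_bound" by (simp add: summable_Suc_iff)
  then show ?thesis unfolding partial_sum_def[abs_def] volterra_sum_def[abs_def]
    by (rule Weierstrass_m_test[rotated]) (simp add: norm_volterra_term_le)
qed

lemma continuous_on_volterra_sum:
  assumes "contraction < 1"
  shows "continuous_on {0..} volterra_sum"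
  by (rule uniform_limit_theorem[OF _ uniform_limit_partial_sum[OF assms]])
    (auto simp: partial_sum_def[abs_def] intro!: always_eventually continuous_on_sum continuous_on_volterra_term)

lemma volterra_sum_eq:
  assumes q: "contraction < 1" and t: "t \<ge> 0"
  shows "volterra_sum t = T t \<phi>0 + duhamel (\<lambda>i s. N i (volterra_sum s) + B (axis i 1)) t"
proof -
  have ul: "uniform_limit {0..} (\<lambda>K. partial_sum (Suc K)) volterra_sum sequentially"
    using filterlim_compose[OF uniform_limit_partial_sum[OF q] filterlim_Suc] by (simp add: o_def)
  have cont_partial: "continuous_on {0..t} (partial_sum K)" for K
    unfolding partial_sum_def[abs_def]
    by (intro continuous_on_sum continuous_on_subset[OF continuous_on_volterra_term]) auto
  have "(\<lambda>K. partial_sum (Suc (Suc K)) t) \<longlonglongrightarrow> volterra_sum t"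
    using LIMSEQ_Suc[OF tendsto_uniform_limitI[OF ul, of t]] t by simp
  moreover have "(\<lambda>K. partial_sum (Suc (Suc K)) t)
      \<longlonglongrightarrow> T t \<phi>0 + duhamel (\<lambda>i s. N i (volterra_sum s) + B (axis i 1)) t"
    unfolding partial_sum_Suc_Suc[OF t]
  proof (intro tendsto_add tendsto_const duhamel_tendsto t)
    show "uniform_limit {0..t} (\<lambda>K s. N i (partial_sum (Suc K) s) + B (axis i 1))
        (\<lambda>s. N i (volterra_sum s) + B (axis i 1)) sequentially" for i
      by (intro uniform_limit_intros bounded_linear.uniform_limit[OF blinfun.bounded_linear_right]
          uniform_limit_on_subset[OF ul]) auto
  qed (auto intro!: continuous_intros cont_partial continuous_on_subset[OF continuous_on_volterra_sum[OF q]])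
  ultimately show ?thesis by (rule LIMSEQ_unique)
qed

lemma volterra_sum_mild:
  assumes q: "contraction < 1" and t: "t \<ge> 0"
  shows "((\<lambda>s. T (t - s) (ctrl_term N u s (volterra_sum s) + B (u s))) has_integral
      (volterra_sum t - T t \<phi>0)) {0..t}"
proof -
  have "continuous_on {0..t} (\<lambda>s. N i (volterra_sum s) + B (axis i 1))" for i
    using t by (auto intro!: continuous_intros continuous_on_subset[OF continuous_on_volterra_sum[OF q]])
  from integrable_integral[OF integrable_duhamel_integrand[OF this]]
  show ?thesis
    using ctrl_term_add_eq_sum[of N u _ _ True B] by (simp add: volterra_sum_eq[OF q t] duhamel_def)
qed

lemma contraction_less_one:
  assumes "M * (\<Sum>i\<in>UNIV. norm (N i)) * sqrt energy < sqrt (2 * \<nu>)"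
  shows "contraction < 1"
  using assms decay_rate_pos by (simp add: contraction_def divide_less_eq)

end

section \<open>Transfer to a Banach space instance\<close>

text \<open>The sort \<open>{real_inner, complete_space}\<close> of the theorem is not a subsort of \<open>banach\<close>,
  which most of the integration library requires. The argument is therefore run on an isometric
  copy of the space, which is an instance of \<open>banach\<close>.\<close>

typedef 'a banach_copy = "UNIV :: 'a::real_normed_vector set"
  morphisms from_copy to_copy by simp

setup_lifting type_definition_banach_copy

declare to_copy_inverse [simp] from_copy_inverse [simp]

instantiation banach_copy :: (real_normed_vector) real_vector
begin
lift_definition zero_banach_copy :: "'a banach_copy" is 0 .
lift_definition plus_banach_copy :: "'a banach_copy \<Rightarrow> 'a banach_copy \<Rightarrow> 'a banach_copy" is "(+)" .
lift_definition minus_banach_copy :: "'a banach_copy \<Rightarrow> 'a banach_copy \<Rightarrow> 'a banach_copy" is "(-)" .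
lift_definition uminus_banach_copy :: "'a banach_copy \<Rightarrow> 'a banach_copy" is uminus .
lift_definition scaleR_banach_copy :: "real \<Rightarrow> 'a banach_copy \<Rightarrow> 'a banach_copy" is scaleR .
instance
  by standard (transfer; simp add: algebra_simps)+
end

instantiation banach_copy :: (real_normed_vector) real_normed_vector
begin
lift_definition norm_banach_copy :: "'a banach_copy \<Rightarrow> real" is norm .
lift_definition dist_banach_copy :: "'a banach_copy \<Rightarrow> 'a banach_copy \<Rightarrow> real" is dist .
lift_definition sgn_banach_copy :: "'a banach_copy \<Rightarrow> 'a banach_copy" is sgn .
definition uniformity_banach_copy :: "('a banach_copy \<times> 'a banach_copy) filter" where
  "uniformity_banach_copy = (INF e\<in>{0 <..}. principal {(x, y). dist x y < e})"
definition open_banach_copy :: "'a banach_copy set \<Rightarrow> bool" where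
  "open_banach_copy S = (\<forall>x\<in>S. \<forall>\<^sub>F (x', y) in uniformity. x' = x \<longrightarrow> y \<in> S)"
instance
proof
  fix x y :: "'a banach_copy" and a :: real
  show "dist x y = norm (x - y)" by transfer (simp add: dist_norm)
  show "norm x = 0 \<longleftrightarrow> x = 0" by transfer simp
  show "norm (x + y) \<le> norm x + norm y" by transfer (rule norm_triangle_ineq)
  show "norm (a *\<^sub>R x) = \<bar>a\<bar> * norm x" by transfer simp
  show "sgn x = x /\<^sub>R norm x" by transfer (simp add: sgn_div_norm)
qed (rule uniformity_banach_copy_def open_banach_copy_def)+
end

lemma norm_from_copy [simp]: "norm (from_copy x) = norm x"
  by transfer simp

lemma norm_to_copy [simp]: "norm (to_copy x) = norm x"
  by transfer simp

lemma dist_from_copy [simp]: "dist (from_copy x) (from_copy y) = dist x y"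
  by transfer simp

lemma bounded_linear_from_copy: "bounded_linear from_copy"
  by (rule bounded_linear_intro[of _ 1]) (transfer; simp)+

lemma bounded_linear_to_copy: "bounded_linear to_copy"
  by (rule bounded_linear_intro[of _ 1]) (transfer; simp)+

instance banach_copy :: ("{real_normed_vector, complete_space}") banach
proof
  fix X :: "nat \<Rightarrow> 'a banach_copy" assume "Cauchy X"
  then have "Cauchy (\<lambda>n. from_copy (X n))"
    unfolding Cauchy_def by simp
  then obtain L where "(\<lambda>n. from_copy (X n)) \<longlonglongrightarrow> L"
    using convergent_eq_Cauchy convergent_def by blast
  from bounded_linear.tendsto[OF bounded_linear_to_copy this]
  show "convergent X" unfolding convergent_def by auto
qed

lemma from_copy_add [simp]: "from_copy (x + y) = from_copy x + from_copy y"
  by transfer simp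

lemma from_copy_diff [simp]: "from_copy (x - y) = from_copy x - from_copy y"
  by transfer simp

lemma from_copy_zero [simp]: "from_copy 0 = 0"
  by transfer simp

lemma from_copy_scaleR [simp]: "from_copy (a *\<^sub>R x) = a *\<^sub>R from_copy x"
  by transfer simp

lemma from_copy_sum [simp]: "from_copy (\<Sum>i\<in>A. f i) = (\<Sum>i\<in>A. from_copy (f i))"
  by (induction A rule: infinite_finite_induct) simp_all

lemma integral_from_copy: "from_copy (integral S f) = integral S (\<lambda>s. from_copy (f s))"
proof (cases "f integrable_on S")
  case True
  then show ?thesis using integral_linear[OF True bounded_linear_from_copy] by (simp add: o_def)
next
  case False
  then have "\<not> (\<lambda>s. from_copy (f s)) integrable_on S"
    using integrable_linear[OF _ bounded_linear_to_copy, of "\<lambda>s. from_copy (f s)" S] by (auto simp: o_def)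
  then show ?thesis using False by (simp add: not_integrable_integral)
qed

definition copy_blinfun ::
    "('a::real_normed_vector \<Rightarrow>\<^sub>L 'b::real_normed_vector) \<Rightarrow> 'a banach_copy \<Rightarrow>\<^sub>L 'b banach_copy" where
  "copy_blinfun A = Blinfun (\<lambda>x. to_copy (A (from_copy x)))"

definition blinfun_to_copy ::
    "('a::real_normed_vector \<Rightarrow>\<^sub>L 'b::real_normed_vector) \<Rightarrow> 'a \<Rightarrow>\<^sub>L 'b banach_copy" where
  "blinfun_to_copy A = Blinfun (\<lambda>x. to_copy (A x))"

lemma copy_blinfun_apply [simp]: "copy_blinfun A x = to_copy (A (from_copy x))"
proof -
  have "bounded_linear (\<lambda>x. to_copy (A (from_copy x)))"
    using bounded_linear_compose[OF bounded_linear_to_copy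
        bounded_linear_compose[OF blinfun.bounded_linear_right bounded_linear_from_copy]] .
  then show ?thesis unfolding copy_blinfun_def by (simp add: bounded_linear_Blinfun_apply)
qed

lemma blinfun_to_copy_apply [simp]: "blinfun_to_copy A x = to_copy (A x)"
proof -
  have "bounded_linear (\<lambda>x. to_copy (A x))"
    using bounded_linear_compose[OF bounded_linear_to_copy blinfun.bounded_linear_right] .
  then show ?thesis unfolding blinfun_to_copy_def by (simp add: bounded_linear_Blinfun_apply)
qed

lemma norm_copy_blinfun_le: "norm (copy_blinfun A) \<le> norm A"
  by (rule norm_blinfun_bound) (use norm_blinfun[of A "from_copy _"] in simp_all)

lemma C0_semigroup_copy_blinfun:
  assumes "C0_semigroup T"
  shows "C0_semigroup (\<lambda>t. copy_blinfun (T t))"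
  unfolding C0_semigroup_def
proof (intro conjI allI impI)
  show "copy_blinfun (T 0) = id_blinfun"
    using assms unfolding C0_semigroup_def by (intro blinfun_eqI) simp
  show "copy_blinfun (T (t + s)) = copy_blinfun (T t) o\<^sub>L copy_blinfun (T s)" if "0 \<le> t" "0 \<le> s" for t s
    using assms that unfolding C0_semigroup_def by (intro blinfun_eqI) simp
  fix x
  have "((\<lambda>t. T t (from_copy x)) \<longlongrightarrow> from_copy x) (at_right 0)"
    using assms unfolding C0_semigroup_def by blast
  from bounded_linear.tendsto[OF bounded_linear_to_copy this]
  show "((\<lambda>t. copy_blinfun (T t) x) \<longlongrightarrow> x) (at_right 0)" by simp
qed

lemma ctrl_term_copy_blinfun:
  "from_copy (ctrl_term (\<lambda>i. copy_blinfun (N i)) u s z) = ctrl_term N u s (from_copy z)"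
  unfolding ctrl_term_def by simp

lemma volterra_term_copy_blinfun:
  "from_copy (volterra_term (\<lambda>t. copy_blinfun (T t)) (\<lambda>i. copy_blinfun (N i)) (blinfun_to_copy B)
      u (to_copy \<phi>0) m t) = volterra_term T N B u \<phi>0 m t"
proof (induction m arbitrary: t)
  case (Suc m)
  then show ?case
    by (simp add: integral_from_copy ctrl_term_copy_blinfun if_distrib[of from_copy] cong: if_cong)
qed simp

theorem lemmaA1:
  fixes T :: "real \<Rightarrow> ('a::{real_inner, complete_space}) \<Rightarrow>\<^sub>L 'a"
    and N :: "'n::finite \<Rightarrow> 'a \<Rightarrow>\<^sub>L 'a"
    and B :: "(real^'n) \<Rightarrow>\<^sub>L 'a"
    and u :: "real \<Rightarrow> real^'n"
    and \<phi>0 :: 'a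
    and M \<nu> :: real
  assumes sg: "C0_semigroup T"
    and bound: "\<forall>t\<ge>0. norm (T t) \<le> M * exp (- \<nu> * t)"
    and nu_pos: "\<nu> > 0"
    and u_meas: "set_borel_measurable lborel {0<..} u"
    and u_L2: "set_integrable lborel {0<..} (\<lambda>s. (infnorm (u s))\<^sup>2)"
    and u_small: "M * (\<Sum>i\<in>UNIV. norm (N i)) * control_L2_norm u < sqrt (2 * \<nu>)"
  shows "\<exists>\<zeta>. uniform_limit {0<..} (\<lambda>K t. \<Sum>m<K. volterra_term T N B u \<phi>0 m t) \<zeta> sequentially
             \<and> (\<forall>t>0. ((\<lambda>s. T (t - s) (ctrl_term N u s (\<zeta> s) + B (u s))) has_integral (\<zeta> t - T t \<phi>0)) {0..t})"
proof -
  interpret volterra_series "\<lambda>t. copy_blinfun (T t)" M \<nu> u "\<lambda>i. copy_blinfun (N i)" "blinfun_to_copy B" "to_copy \<phi>0"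
  proof unfold_locales
    show "\<forall>t\<ge>0. norm (copy_blinfun (T t)) \<le> M * exp (- \<nu> * t)"
      using bound norm_copy_blinfun_le order_trans by blast
  qed (use C0_semigroup_copy_blinfun[OF sg] nu_pos u_meas u_L2 in auto)
  have "(\<Sum>i\<in>UNIV. norm (copy_blinfun (N i))) \<le> (\<Sum>i\<in>UNIV. norm (N i))"
    by (intro sum_mono norm_copy_blinfun_le)
  then have "M * (\<Sum>i\<in>UNIV. norm (copy_blinfun (N i))) * sqrt energy \<le> M * (\<Sum>i\<in>UNIV. norm (N i)) * sqrt energy"
    using M_nonneg energy_nonneg by (intro mult_right_mono mult_left_mono) simp_all
  moreover have "M * (\<Sum>i\<in>UNIV. norm (N i)) * sqrt energy < sqrt (2 * \<nu>)"
    using u_small unfolding control_L2_norm_def energy_def .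
  ultimately have q: "contraction < 1"
    by (intro contraction_less_one) linarith
  have partial_sums: "(\<Sum>m<K. volterra_term T N B u \<phi>0 m t) = from_copy (partial_sum K t)" for K t
    by (simp add: partial_sum_def volterra_term_copy_blinfun)
  show ?thesis
  proof (intro exI[of _ "\<lambda>t. from_copy (volterra_sum t)"] conjI allI impI)
    show "uniform_limit {0<..} (\<lambda>K t. \<Sum>m<K. volterra_term T N B u \<phi>0 m t) (\<lambda>t. from_copy (volterra_sum t)) sequentially"
      unfolding partial_sums
      by (intro bounded_linear.uniform_limit[OF bounded_linear_from_copy]
          uniform_limit_on_subset[OF uniform_limit_partial_sum[OF q]]) auto
    fix t :: real assume "t > 0"
    from has_integral_linear[OF volterra_sum_mild[OF q] bounded_linear_from_copy] \<open>t > 0\<close>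
    show "((\<lambda>s. T (t - s) (ctrl_term N u s (from_copy (volterra_sum s)) + B (u s))) has_integral
        (from_copy (volterra_sum t) - T t \<phi>0)) {0..t}"
      by (simp add: o_def ctrl_term_copy_blinfun)
  qed
qed

end
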